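(* Let $(\Omega(\mathcal{A}),d)$ be a differential calculus on a complex algebra $\mathcal{A}$ with $\mathcal{E}=\Omega^1(\mathcal{A})$ a finitely generated projective right $\mathcal{A}$-module satisfying: (1) $\mathcal{E}=\mathcal{Z}(\mathcal{E})\otimes_{\mathcal{Z}(\mathcal{A})}\mathcal{A}$; (2) $\mathcal{E}\otimes_{\mathcal{A}}\mathcal{E}=\ker(\wedge)\oplus\mathcal{F}$ with $Q=\wedge|_{\mathcal{F}}:\mathcal{F}\to\Omega^2(\mathcal{A})$ a right $\mathcal{A}$-linear isomorphism; (3) $\sigma(\omega\otimes_{\mathcal{A}}\eta)=\eta\otimes_{\mathcal{A}}\omega$ for all $\omega,\eta\in\mathcal{Z}(\mathcal{E})$. Let $g$ be a pseudo-Riemannian bilinear metric and $\nabla_0$ as in the context. For $\omega,\eta,\theta\in\mathcal{Z}(\mathcal{E})$ define \begin{align*} \psi_{\omega,\theta}(\eta)&=g(\omega\otimes_{\mathcal{A}}dg(\eta\otimes_{\mathcal{A}}\theta))-g(\eta\otimes_{\mathcal{A}}dg(\theta\otimes_{\mathcal{A}}\omega))+g(\theta\otimes_{\mathcal{A}}dg(\omega\otimes_{\mathcal{A}}\eta))\\ &\quad-G_{\eta,\theta}\big((1-\sigma)\nabla_0(\omega)\big)+G_{\omega,\theta}\big((1-\sigma)\nabla_0(\eta)\big)-G_{\eta,\omega}\big((1-\sigma)\nabla_0(\theta)\big). \end{align*} Then $\psi_{\omega,\theta}(\eta)\in\mathcal{Z}(\mathcal{A})$ for all $\omega,\eta,\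theta\in\mathcal{Z}(\mathcal{E})$.
   Context: A differential calculus: $\Omega(\mathcal{A})=\oplus_{j\ge0}\Omega^j(\mathcal{A})$, $\Omega^0=\mathcal{A}$, bimodules $\Omega^j$, an $\mathcal{A}$-bimodule product $\wedge$ adding degrees, $d$ of degree one with $d^2=0$ and the graded Leibniz rule, $\Omega^j$ right-spanned by $da_0\wedge\cdots\wedge da_{j-1}$. $\wedge:\mathcal{E}\otimes_{\mathcal{A}}\mathcal{E}\to\Omega^2(\mathcal{A})$ is the induced product; $P_{\rm sym}$ the idempotent with image $\ker\wedge$ and kernel $\mathcal{F}$; $\sigma=2P_{\rm sym}-1$. $\mathcal{Z}(\mathcal{M})=\{m:am=ma\ \forall a\in\mathcal{A}\}$. A connection is a $\mathbb{C}$-linear $\nabla:\mathcal{E}\to\mathcal{E}\otimes_{\mathcal{A}}\mathcal{E}$ with $\nabla(\omega a)=\nabla(\omega)a+\omega\otimes_{\mathcal{A}}da$. With an idempotent $p\in M_n(\mathcal{A})$, $p(\mathcal{A}^n)=\mathcal{E}$, $\Phi_j=p(e_j)$, $\nabla^{Gr}(\sum_j\Phi_ja_j)=\sum_j\Phi_j\otimes_{\mathcal{A}}da_j$ and $\nabla_0:=\nabla^{Gr}-Q^{-1}\circ(\wedge\circ\nabla^{Gr}+d)$. A pseudo-Riemannian bilinear metric is an $\mathcal{A}$-bimodule map $g:\mathcal{E}\otimes_{\mathcal{A}}\mathcal{E}\to\mathcal{A}$ with $g\circ\sigma=g$ such that $e\mapsto g(e\otimes_{\mathcal{A}}-)$ is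 a right module isomorphism $\mathcal{E}\to\mathrm{Hom}_{\mathcal{A}}(\mathcal{E},\mathcal{A})$. For $\alpha,\beta\in\mathcal{E}$, $G_{\alpha,\beta}:\mathcal{E}\otimes_{\mathcal{A}}\mathcal{E}\to\mathcal{A}$ denotes the (well-defined) map $x\otimes_{\mathcal{A}}y\mapsto g(\alpha\otimes_{\mathcal{A}}x)\,g(\beta\otimes_{\mathcal{A}}y)$, written in the paper as $(g(\alpha\otimes_{\mathcal{A}}-)\otimes_{\mathcal{A}}g(\beta\otimes_{\mathcal{A}}-))$. *)

theory Defs
  imports Complex_Main "HOL-Library.Poly_Mapping"
begin

(* The whole differential calculus Omega(A) is modelled as one associative
   unital ring 'w (the product is the wedge product); Om j :: 'w set is the
   degree-j part, A = Om 0, E = Om 1, Omega^2 = Om 2.  The bimodule actions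
   of A are multiplication in 'w.  The complex structure is a ring
   homomorphism c : complex -> A with central image.

   Tensor products  M \<otimes>_R N  (M, N, R subsets of 'w, actions by ring
   multiplication) are built concretely: the free abelian group on M x N
   (finitely supported int-valued functions on pairs) modulo the additive
   subgroup generated by bi-additivity and R-balancing relations.
   An element of the tensor product is represented by a free element;
   two representatives are equal in the tensor product iff their
   difference lies in trel M R N.
   ------------------------------------------------------------------------ *)

type_synonym 'w frtens = "('w \<times> 'w) \<Rightarrow>\<^sub>0 int"

definition tens :: "'w \<Rightarrow> 'w \<Rightarrow> 'w frtens" where
  "tens x y = Poly_Mapping.single (x, y) 1"

definition tfree :: "'w set \<Rightarrow> 'w set \<Rightarrow> 'w frtens set" where
  "tfree M N = {t. Poly_Mapping.keys t \<subseteq> M \<times> N}"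

definition tgen :: "'w::ring set \<Rightarrow> 'w set \<Rightarrow> 'w set \<Rightarrow> 'w frtens set" where
  "tgen M R N =
     {tens (m + m') n - tens m n - tens m' n | m m' n. m \<in> M \<and> m' \<in> M \<and> n \<in> N}
   \<union> {tens m (n + n') - tens m n - tens m n' | m n n'. m \<in> M \<and> n \<in> N \<and> n' \<in> N}
   \<union> {tens (m * r) n - tens m (r * n) | m r n. m \<in> M \<and> r \<in> R \<and> n \<in> N}"

inductive_set addspan :: "'b::ab_group_add set \<Rightarrow> 'b set" for S where
  addspan_zero: "0 \<in> addspan S"
| addspan_base: "x \<in> S \<Longrightarrow> x \<in> addspan S"
| addspan_add: "x \<in> addspan S \<Longrightarrow> y \<in> addspan S \<Longrightarrow> x + y \<in> addspan S"
| addspan_neg: "x \<in> addspan S \<Longrightarrow> - x \<in> addspan S"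

definition trel :: "'w::ring set \<Rightarrow> 'w set \<Rightarrow> 'w set \<Rightarrow> 'w frtens set" where
  "trel M R N = addspan (tgen M R N)"

definition tlift :: "('w::ring_1 \<Rightarrow> 'w \<Rightarrow> 'w) \<Rightarrow> 'w frtens \<Rightarrow> 'w" where
  "tlift f t = (\<Sum>p\<in>Poly_Mapping.keys t. of_int (Poly_Mapping.lookup t p) * f (fst p) (snd p))"

definition tright :: "'w frtens \<Rightarrow> 'w::ring \<Rightarrow> 'w frtens" where
  "tright t a = (\<Sum>p\<in>Poly_Mapping.keys t. Poly_Mapping.single (fst p, snd p * a) (Poly_Mapping.lookup t p))"

definition wedgeT :: "'w::ring_1 frtens \<Rightarrow> 'w" where
  "wedgeT t = tlift (*) t"

definition centre_of :: "'w::ring set \<Rightarrow> 'w set \<Rightarrow> 'w set" where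
  "centre_of M A = {m \<in> M. \<forall>a\<in>A. a * m = m * a}"

definition diff_calculus ::
  "(nat \<Rightarrow> 'w::ring_1 set) \<Rightarrow> ('w \<Rightarrow> 'w) \<Rightarrow> (complex \<Rightarrow> 'w) \<Rightarrow> bool" where
  "diff_calculus Om d c \<longleftrightarrow>
     \<comment> \<open>complex algebra structure on A = Om 0\<close>
     (\<forall>z. c z \<in> Om 0) \<and> c 1 = 1 \<and> (\<forall>z w. c (z + w) = c z + c w) \<and>
     (\<forall>z w. c (z * w) = c z * c w) \<and> (\<forall>z x. c z * x = x * c z) \<and>
     \<comment> \<open>grading: each Om j an additive subgroup, products add degrees\<close>
     (\<forall>j. 0 \<in> Om j \<and> (\<forall>x\<in>Om j. \<forall>y\<in>Om j. x + y \<in> Om j \<and> - x \<in> Om j)) \<and>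
     1 \<in> Om 0 \<and>
     (\<forall>i j. \<forall>x\<in>Om i. \<forall>y\<in>Om j. x * y \<in> Om (i + j)) \<and>
     \<comment> \<open>Omega = direct sum of the Om j\<close>
     (\<forall>x. \<exists>(N::nat) w. (\<forall>j<N. w j \<in> Om j) \<and> x = (\<Sum>j<N. w j)) \<and>
     (\<forall>(N::nat) w. (\<forall>j<N. w j \<in> Om j) \<and> (\<Sum>j<N. w j) = 0 \<longrightarrow> (\<forall>j<N. w j = 0)) \<and>
     \<comment> \<open>d: degree one, additive, complex linear, d^2 = 0, graded Leibniz\<close>
     (\<forall>j. \<forall>x\<in>Om j. d x \<in> Om (Suc j)) \<and>
     (\<forall>x y. d (x + y) = d x + d y) \<and>
     (\<forall>z x. d (c z * x) = c z * d x) \<and>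
     (\<forall>x. d (d x) = 0) \<and>
     (\<forall>i. \<forall>x\<in>Om i. \<forall>y. d (x * y) = d x * y + (-1) ^ i * x * d y) \<and>
     \<comment> \<open>Om j right-spanned by da_0 \<and> ... \<and> da_{j-1}\<close>
     (\<forall>j. \<forall>w\<in>Om j. \<exists>(N::nat) a b. (\<forall>k<N. \<forall>i<j. a k i \<in> Om 0) \<and> (\<forall>k<N. b k \<in> Om 0) \<and>
          w = (\<Sum>k<N. prod_list (map (\<lambda>i. d (a k i)) [0..<j]) * b k))"

text \<open>E = Om 1 is finitely generated projective: p an idempotent n x n matrix
  over A and iota a right-A-linear bijection from E onto p(A^n)
  (vectors are functions nat \<Rightarrow> 'w vanishing from n on).\<close>
definition pA_n :: "(nat \<Rightarrow> 'w::ring_1 set) \<Rightarrow> nat \<Rightarrow> (nat \<Rightarrow> nat \<Rightarrow> 'w) \<Rightarrow> (nat \<Rightarrow> 'w) set" where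
  "pA_n Om n p = {v. (\<forall>k<n. v k \<in> Om 0) \<and> (\<forall>k\<ge>n. v k = 0) \<and>
                     (\<forall>i<n. (\<Sum>k<n. p i k * v k) = v i)}"

definition fg_projective ::
  "(nat \<Rightarrow> 'w::ring_1 set) \<Rightarrow> nat \<Rightarrow> (nat \<Rightarrow> nat \<Rightarrow> 'w) \<Rightarrow> ('w \<Rightarrow> nat \<Rightarrow> 'w) \<Rightarrow> bool" where
  "fg_projective Om n p iota \<longleftrightarrow>
     (\<forall>i<n. \<forall>j<n. p i j \<in> Om 0) \<and>
     (\<forall>i<n. \<forall>j<n. (\<Sum>k<n. p i k * p k j) = p i j) \<and>
     bij_betw iota (Om 1) (pA_n Om n p) \<and>
     (\<forall>x\<in>Om 1. \<forall>y\<in>Om 1. iota (x + y) = (\<lambda>k. iota x k + iota y k)) \<and>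
     (\<forall>x\<in>Om 1. \<forall>a\<in>Om 0. iota (x * a) = (\<lambda>k. iota x k * a))"

text \<open>Phi_j = p(e_j), viewed in E via iota.\<close>
definition Phi :: "(nat \<Rightarrow> 'w::ring_1 set) \<Rightarrow> nat \<Rightarrow> (nat \<Rightarrow> nat \<Rightarrow> 'w) \<Rightarrow> ('w \<Rightarrow> nat \<Rightarrow> 'w) \<Rightarrow> nat \<Rightarrow> 'w" where
  "Phi Om n p iota j = inv_into (Om 1) iota (\<lambda>k. if k < n then p k j else 0)"

text \<open>Grassmann connection: nabla^Gr (sum_j Phi_j a_j) = sum_j Phi_j \<otimes> d a_j,
  where (a_j) = iota omega \<in> p(A^n).\<close>
definition nablaGr :: "(nat \<Rightarrow> 'w::ring_1 set) \<Rightarrow> ('w \<Rightarrow> 'w) \<Rightarrow> nat \<Rightarrow> (nat \<Rightarrow> nat \<Rightarrow> 'w)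
    \<Rightarrow> ('w \<Rightarrow> nat \<Rightarrow> 'w) \<Rightarrow> 'w \<Rightarrow> 'w frtens" where
  "nablaGr Om d n p iota \<omega> = (\<Sum>j<n. tens (Phi Om n p iota j) (d (iota \<omega> j)))"

text \<open>Condition (1): the canonical map Z(E) \<otimes>_{Z(A)} A \<rightarrow> E, z \<otimes> a \<mapsto> z a, is bijective.\<close>
definition cond_central_basis :: "(nat \<Rightarrow> 'w::ring_1 set) \<Rightarrow> bool" where
  "cond_central_basis Om \<longleftrightarrow>
     (let ZE = centre_of (Om 1) (Om 0); ZA = centre_of (Om 0) (Om 0) in
       (\<forall>\<omega>\<in>Om 1. \<exists>t\<in>tfree ZE (Om 0). wedgeT t = \<omega>) \<and>
       (\<forall>t\<in>tfree ZE (Om 0). wedgeT t = 0 \<longrightarrow> t \<in> trel ZE ZA (Om 0)))"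

text \<open>Condition (2) together with P_sym: E \<otimes>_A E = ker(wedge) \<oplus> F (F a right
  A-submodule), Q = wedge|_F : F \<rightarrow> Omega^2 bijective, and psym the idempotent
  (additive, well defined on the quotient) with image ker(wedge) and kernel F.\<close>
definition cond_split ::
  "(nat \<Rightarrow> 'w::ring_1 set) \<Rightarrow> 'w frtens set \<Rightarrow> ('w frtens \<Rightarrow> 'w frtens) \<Rightarrow> bool" where
  "cond_split Om F psym \<longleftrightarrow>
     (let T = tfree (Om 1) (Om 1); R = trel (Om 1) (Om 0) (Om 1) in
       \<comment> \<open>F is a right A-submodule of E \<otimes>_A E (saturated w.r.t. R)\<close>
       F \<subseteq> T \<and> 0 \<in> F \<and> (\<forall>x\<in>F. \<forall>y\<in>F. x + y \<in> F \<and> - x \<in> F) \<and>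
       (\<forall>x\<in>F. \<forall>a\<in>Om 0. tright x a \<in> F) \<and>
       (\<forall>x\<in>F. \<forall>y\<in>T. x - y \<in> R \<longrightarrow> y \<in> F) \<and>
       \<comment> \<open>direct sum ker(wedge) + F\<close>
       (\<forall>x\<in>T. \<exists>k\<in>T. \<exists>f\<in>F. wedgeT k = 0 \<and> x - (k + f) \<in> R) \<and>
       (\<forall>f\<in>F. wedgeT f = 0 \<longrightarrow> f \<in> R) \<and>
       \<comment> \<open>Q = wedge restricted to F is onto Omega^2 (injective by the above)\<close>
       (\<forall>w\<in>Om 2. \<exists>f\<in>F. wedgeT f = w) \<and>
       \<comment> \<open>P_sym\<close>
       (\<forall>x\<in>T. psym x \<in> T) \<and>
       (\<forall>x\<in>T. \<forall>y\<in>T. psym (x + y) - (psym x + psym y) \<in> R) \<and>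
       (\<forall>x\<in>R. psym x \<in> R) \<and>
       (\<forall>x\<in>T. psym (psym x) - psym x \<in> R) \<and>
       (\<forall>x\<in>T. wedgeT (psym x) = 0) \<and>
       (\<forall>k\<in>T. wedgeT k = 0 \<longrightarrow> (\<exists>x\<in>T. psym x - k \<in> R)) \<and>
       (\<forall>x\<in>T. psym x \<in> R \<longleftrightarrow> x \<in> F))"

definition sigmaT :: "('w frtens \<Rightarrow> 'w frtens) \<Rightarrow> 'w frtens \<Rightarrow> 'w::ring frtens" where
  "sigmaT psym t = psym t + psym t - t"

definition cond_flip :: "(nat \<Rightarrow> 'w::ring_1 set) \<Rightarrow> ('w frtens \<Rightarrow> 'w frtens) \<Rightarrow> bool" where
  "cond_flip Om psym \<longleftrightarrow>
     (\<forall>\<omega>\<in>centre_of (Om 1) (Om 0). \<forall>\<eta>\<in>centre_of (Om 1) (Om 0).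
        sigmaT psym (tens \<omega> \<eta>) - tens \<eta> \<omega> \<in> trel (Om 1) (Om 0) (Om 1))"

text \<open>A pseudo-Riemannian bilinear metric, given by the balanced bi-additive map
  g (x, y) = g(x \<otimes> y) (universal property of \<otimes>_A).\<close>
definition pseudo_riem_metric ::
  "(nat \<Rightarrow> 'w::ring_1 set) \<Rightarrow> ('w frtens \<Rightarrow> 'w frtens) \<Rightarrow> ('w \<Rightarrow> 'w \<Rightarrow> 'w) \<Rightarrow> bool" where
  "pseudo_riem_metric Om psym g \<longleftrightarrow>
     (\<forall>x\<in>Om 1. \<forall>y\<in>Om 1. g x y \<in> Om 0) \<and>
     (\<forall>x\<in>Om 1. \<forall>x'\<in>Om 1. \<forall>y\<in>Om 1. g (x + x') y = g x y + g x' y) \<and>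
     (\<forall>x\<in>Om 1. \<forall>y\<in>Om 1. \<forall>y'\<in>Om 1. g x (y + y') = g x y + g x y') \<and>
     (\<forall>x\<in>Om 1. \<forall>y\<in>Om 1. \<forall>a\<in>Om 0. g (x * a) y = g x (a * y)) \<and>
     (\<forall>x\<in>Om 1. \<forall>y\<in>Om 1. \<forall>a\<in>Om 0. g (a * x) y = a * g x y) \<and>
     (\<forall>x\<in>Om 1. \<forall>y\<in>Om 1. \<forall>a\<in>Om 0. g x (y * a) = g x y * a) \<and>
     (\<forall>t\<in>tfree (Om 1) (Om 1). tlift g (sigmaT psym t) = tlift g t) \<and>
     (\<forall>\<phi>. (\<forall>x\<in>Om 1. \<phi> x \<in> Om 0) \<and>
          (\<forall>x\<in>Om 1. \<forall>y\<in>Om 1. \<phi> (x + y) = \<phi> x + \<phi> y) \<and>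
          (\<forall>x\<in>Om 1. \<forall>a\<in>Om 0. \<phi> (x * a) = \<phi> x * a)
        \<longrightarrow> (\<exists>!e. e \<in> Om 1 \<and> (\<forall>x\<in>Om 1. g e x = \<phi> x)))"

definition Qinv :: "'w frtens set \<Rightarrow> 'w::ring_1 \<Rightarrow> 'w frtens" where
  "Qinv F w = (SOME f. f \<in> F \<and> wedgeT f = w)"

definition nabla0 :: "(nat \<Rightarrow> 'w::ring_1 set) \<Rightarrow> ('w \<Rightarrow> 'w) \<Rightarrow> nat \<Rightarrow> (nat \<Rightarrow> nat \<Rightarrow> 'w)
    \<Rightarrow> ('w \<Rightarrow> nat \<Rightarrow> 'w) \<Rightarrow> 'w frtens set \<Rightarrow> 'w \<Rightarrow> 'w frtens" where
  "nabla0 Om d n p iota F \<omega> =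
     nablaGr Om d n p iota \<omega> - Qinv F (wedgeT (nablaGr Om d n p iota \<omega>) + d \<omega>)"

definition Gmap :: "('w::ring_1 \<Rightarrow> 'w \<Rightarrow> 'w) \<Rightarrow> 'w \<Rightarrow> 'w \<Rightarrow> 'w frtens \<Rightarrow> 'w" where
  "Gmap g \<alpha> \<beta> t = tlift (\<lambda>x y. g \<alpha> x * g \<beta> y) t"

definition psi :: "(nat \<Rightarrow> 'w::ring_1 set) \<Rightarrow> ('w \<Rightarrow> 'w) \<Rightarrow> nat \<Rightarrow> (nat \<Rightarrow> nat \<Rightarrow> 'w)
    \<Rightarrow> ('w \<Rightarrow> nat \<Rightarrow> 'w) \<Rightarrow> 'w frtens set \<Rightarrow> ('w frtens \<Rightarrow> 'w frtens) \<Rightarrow> ('w \<Rightarrow> 'w \<Rightarrow> 'w)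
    \<Rightarrow> 'w \<Rightarrow> 'w \<Rightarrow> 'w \<Rightarrow> 'w" where
  "psi Om d n p iota F psym g \<omega> \<theta> \<eta> =
     (let oms = (\<lambda>x. nabla0 Om d n p iota F x - sigmaT psym (nabla0 Om d n p iota F x)) in
       g \<omega> (d (g \<eta> \<theta>)) - g \<eta> (d (g \<theta> \<omega>)) + g \<theta> (d (g \<omega> \<eta>))
       - Gmap g \<eta> \<theta> (oms \<omega>) + Gmap g \<omega> \<theta> (oms \<eta>) - Gmap g \<eta> \<omega> (oms \<theta>))"

end

theory Submission
  imports Defs
begin

text \<open>
  The first three terms of \<open>\<psi>\<close> are values of \<open>g\<close> on pairs of central one-forms, one of them
  being \<open>d\<close> of the central function \<open>g(\<eta> \<otimes> \<theta>)\<close>.  By condition (1) a central function commutes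
  with all of \<open>E\<close>, so \<open>d\<close> maps \<open>Z(A)\<close> into \<open>Z(E)\<close>; and \<open>g\<close> of two central one-forms is central.

  For the \<open>G\<close>-terms, condition (1) writes every \<open>t \<in> E \<otimes>\<^sub>A E\<close> as a sum of tensors \<open>z \<otimes> z' e\<close>
  with \<open>z, z'\<close> central and \<open>e \<in> A\<close>.  By condition (3) and right linearity of \<open>\<sigma>\<close>, \<open>(1 - \<sigma>) t\<close>
  is then the antisymmetric sum \<open>Y = \<Sum> (z \<otimes> z' e - z' \<otimes> z e)\<close>.  Commuting \<open>G(Y)\<close> or \<open>\<wedge>Y\<close>
  with \<open>a \<in> A\<close> replaces every coefficient \<open>e\<close> by \<open>a e - e a\<close>, giving another antisymmetric sum
  \<open>Y'\<close>.  For \<open>t = \<nabla>\<^sub>0 \<omega>\<close> we have \<open>\<wedge>Y = -2 d\<omega>\<close>, which commutes with \<open>A\<close>; so \<open>\<wedge>Y' = 0\<close> and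
  \<open>\<sigma>\<close> fixes \<open>Y'\<close>, while antisymmetry gives \<open>\<sigma>Y' = -Y'\<close>.  Hence \<open>2 Y' = 0\<close>, and since \<open>2\<close> is
  invertible in the complex algebra \<open>A\<close>, \<open>a G(Y) - G(Y) a = G(Y') = 0\<close>.
\<close>

section \<open>Free tensors\<close>

lemma tens_eq_frag_of: "tens x y = frag_of (x, y)"
  by (simp add: tens_def)

lemma keys_tens [simp]: "Poly_Mapping.keys (tens x y) = {(x, y)}"
  by (simp add: tens_def)

lemma tfree_zero [simp]: "0 \<in> tfree M N"
  by (simp add: tfree_def)

lemma tfree_tens [simp]: "tens x y \<in> tfree M N \<longleftrightarrow> x \<in> M \<and> y \<in> N"
  by (simp add: tfree_def)

lemma tfree_add: "s \<in> tfree M N \<Longrightarrow> t \<in> tfree M N \<Longrightarrow> s + t \<in> tfree M N"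
  unfolding tfree_def using keys_add[of s t] by blast

lemma tfree_uminus: "t \<in> tfree M N \<Longrightarrow> - t \<in> tfree M N"
  by (simp add: tfree_def)

lemma tfree_diff: "s \<in> tfree M N \<Longrightarrow> t \<in> tfree M N \<Longrightarrow> s - t \<in> tfree M N"
  using tfree_add[OF _ tfree_uminus, of s M N t] by simp

lemma tfree_sum: "finite K \<Longrightarrow> (\<And>k. k \<in> K \<Longrightarrow> f k \<in> tfree M N) \<Longrightarrow> sum f K \<in> tfree M N"
  by (induction K rule: finite_induct) (simp_all add: tfree_add)

lemma tfree_induct [consumes 1, case_names zero tens diff]:
  assumes "t \<in> tfree M N" and "P 0"
    and "\<And>x y. x \<in> M \<Longrightarrow> y \<in> N \<Longrightarrow> P (tens x y)"
    and "\<And>s t. s \<in> tfree M N \<Longrightarrow> t \<in> tfree M N \<Longrightarrow> P s \<Longrightarrow> P t \<Longrightarrow> P (s - t)"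
  shows "P t"
proof -
  have "Poly_Mapping.keys t \<subseteq> M \<times> N"
    using assms(1) by (simp add: tfree_def)
  then have "t \<in> tfree M N \<and> P t"
  proof (induction t rule: frag_induction)
    case (one q)
    then show ?case
      using assms(3) by (cases q) (simp add: tens_eq_frag_of[symmetric])
  qed (use assms(2,4) tfree_diff in auto)
  then show ?thesis ..
qed

lemma tlift_eq_sum:
  assumes "finite S" "Poly_Mapping.keys t \<subseteq> S"
  shows "tlift f t = (\<Sum>q\<in>S. of_int (Poly_Mapping.lookup t q) * f (fst q) (snd q))"
  unfolding tlift_def using assms by (intro sum.mono_neutral_left) (auto simp: in_keys_iff)

lemma tlift_add: "tlift f (s + t) = tlift f s + tlift f t"
proof -
  let ?S = "Poly_Mapping.keys s \<union> Poly_Mapping.keys t"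
  have "finite ?S" "Poly_Mapping.keys (s + t) \<subseteq> ?S"
    by (simp_all add: keys_add)
  then show ?thesis
    by (simp add: tlift_eq_sum[of ?S] lookup_add distrib_right sum.distrib)
qed

lemma tlift_zero [simp]: "tlift f 0 = 0"
  by (simp add: tlift_def)

lemma tlift_uminus: "tlift f (- t) = - tlift f t"
  using tlift_add[of f "- t" t] by (simp add: eq_neg_iff_add_eq_0)

lemma tlift_diff: "tlift f (s - t) = tlift f s - tlift f t"
  using tlift_add[of f s "- t"] by (simp add: tlift_uminus)

lemma tlift_tens [simp]: "tlift f (tens x y) = f x y"
  by (simp add: tlift_def tens_def)

lemma tright_eq_frag_extend: "tright t a = frag_extend (\<lambda>q. frag_of (fst q, snd q * a)) t"
  unfolding tright_def frag_extend_def
  by (rule sum.cong) (auto simp: frag_cmul_def poly_mapping_eqI lookup_single when_def)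

lemma tright_diff: "tright (s - t) a = tright s a - tright t a"
  by (simp add: tright_eq_frag_extend frag_extend_diff)

lemma tright_add: "tright (s + t) a = tright s a + tright t a"
  by (simp add: tright_eq_frag_extend frag_extend_add)

lemma tright_zero [simp]: "tright 0 a = 0"
  by (simp add: tright_def)

lemma tright_tens [simp]: "tright (tens x y) a = tens x (y * a)"
  by (simp add: tright_eq_frag_extend tens_eq_frag_of)

lemma tright_tfree:
  assumes "t \<in> tfree M N" "\<And>y. y \<in> N \<Longrightarrow> y * a \<in> N"
  shows "tright t a \<in> tfree M N"
  using assms(1) by (induction rule: tfree_induct) (simp_all add: assms(2) tright_diff tfree_diff)

section \<open>Tensor products as quotients\<close>

lemma addspan_diff: "x \<in> addspan S \<Longrightarrow> y \<in> addspan S \<Longrightarrow> x - y \<in> addspan S"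
  by (metis addspan_add addspan_neg diff_conv_add_uminus)

definition tens_equiv :: "'w::ring set \<Rightarrow> 'w set \<Rightarrow> 'w set \<Rightarrow> 'w frtens \<Rightarrow> 'w frtens \<Rightarrow> bool" where
  "tens_equiv M R N s t \<longleftrightarrow> s - t \<in> trel M R N"

lemma tens_equiv_refl [simp]: "tens_equiv M R N t t"
  by (simp add: tens_equiv_def trel_def addspan_zero)

lemma tens_equiv_sym: "tens_equiv M R N s t \<Longrightarrow> tens_equiv M R N t s"
  unfolding tens_equiv_def trel_def by (drule addspan_neg) simp

lemma tens_equiv_trans [trans]:
  "tens_equiv M R N r s \<Longrightarrow> tens_equiv M R N s t \<Longrightarrow> tens_equiv M R N r t"
  unfolding tens_equiv_def trel_def by (drule (1) addspan_add) simp

lemma tens_equiv_iff_diff: "tens_equiv M R N s t \<longleftrightarrow> tens_equiv M R N (s - t) 0"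
  by (simp add: tens_equiv_def)

lemma tens_equiv_add:
  "tens_equiv M R N s s' \<Longrightarrow> tens_equiv M R N t t' \<Longrightarrow> tens_equiv M R N (s + t) (s' + t')"
  unfolding tens_equiv_def trel_def by (drule (1) addspan_add) (simp add: algebra_simps)

lemma tens_equiv_uminus: "tens_equiv M R N s t \<Longrightarrow> tens_equiv M R N (- s) (- t)"
  unfolding tens_equiv_def trel_def by (drule addspan_neg) simp

lemma tens_equiv_diff:
  "tens_equiv M R N s s' \<Longrightarrow> tens_equiv M R N t t' \<Longrightarrow> tens_equiv M R N (s - t) (s' - t')"
  unfolding tens_equiv_def trel_def by (drule (1) addspan_diff) (simp add: algebra_simps)

lemma tgen_cases [consumes 1, case_names add_left add_right balanced]:
  assumes "t \<in> tgen M R N"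
  obtains (add_left) x x' y where "t = tens (x + x') y - tens x y - tens x' y" "x \<in> M" "x' \<in> M" "y \<in> N"
    | (add_right) x y y' where "t = tens x (y + y') - tens x y - tens x y'" "x \<in> M" "y \<in> N" "y' \<in> N"
    | (balanced) x r y where "t = tens (x * r) y - tens x (r * y)" "x \<in> M" "r \<in> R" "y \<in> N"
  using assms unfolding tgen_def by blast

lemma tgen_add_leftI: "x \<in> M \<Longrightarrow> x' \<in> M \<Longrightarrow> y \<in> N \<Longrightarrow> tens (x + x') y - tens x y - tens x' y \<in> tgen M R N"
  unfolding tgen_def by blast

lemma tgen_add_rightI: "x \<in> M \<Longrightarrow> y \<in> N \<Longrightarrow> y' \<in> N \<Longrightarrow> tens x (y + y') - tens x y - tens x y' \<in> tgen M R N"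
  unfolding tgen_def by blast

lemma tgen_balancedI: "x \<in> M \<Longrightarrow> r \<in> R \<Longrightarrow> y \<in> N \<Longrightarrow> tens (x * r) y - tens x (r * y) \<in> tgen M R N"
  unfolding tgen_def by blast

lemma tens_diff_left:
  assumes "x \<in> M" "x' \<in> M" "x - x' \<in> M" "y \<in> N"
  shows "tens_equiv M R N (tens (x - x') y) (tens x y - tens x' y)"
proof -
  have "tens ((x - x') + x') y - tens (x - x') y - tens x' y \<in> tgen M R N"
    using assms by (intro tgen_add_leftI)
  then have "- (tens x y - tens (x - x') y - tens x' y) \<in> addspan (tgen M R N)"
    by (intro addspan_neg addspan_base) simp
  then show ?thesis
    unfolding tens_equiv_def trel_def by (simp add: algebra_simps)
qed

lemma tens_diff_right:
  assumes "x \<in> M" "y \<in> N" "y' \<in> N" "y - y' \<in> N"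
  shows "tens_equiv M R N (tens x (y - y')) (tens x y - tens x y')"
proof -
  have "tens x ((y - y') + y') - tens x (y - y') - tens x y' \<in> tgen M R N"
    using assms by (intro tgen_add_rightI)
  then have "- (tens x y - tens x (y - y') - tens x y') \<in> addspan (tgen M R N)"
    by (intro addspan_neg addspan_base) simp
  then show ?thesis
    unfolding tens_equiv_def trel_def by (simp add: algebra_simps)
qed

lemma tens_balanced:
  "x \<in> M \<Longrightarrow> r \<in> R \<Longrightarrow> y \<in> N \<Longrightarrow> tens_equiv M R N (tens (x * r) y) (tens x (r * y))"
  unfolding tens_equiv_def trel_def by (intro addspan_base tgen_balancedI)

lemma tens_zero_right: "x \<in> M \<Longrightarrow> 0 \<in> N \<Longrightarrow> tens_equiv M R N (tens x 0) 0"
  using tens_diff_right[of x M 0 N 0 R] by simp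

lemma tens_zero_left: "0 \<in> M \<Longrightarrow> y \<in> N \<Longrightarrow> tens_equiv M R N (tens 0 y) 0"
  using tens_diff_left[of 0 M 0 y N R] by simp

lemma tens_uminus_right:
  assumes "x \<in> M" "y \<in> N" "- y \<in> N" "0 \<in> N"
  shows "tens_equiv M R N (tens x (- y)) (- tens x y)"
proof -
  have "tens_equiv M R N (tens x (0 - y)) (tens x 0 - tens x y)"
    using assms by (intro tens_diff_right) simp_all
  also have "tens_equiv M R N \<dots> (0 - tens x y)"
    using assms by (intro tens_equiv_diff tens_zero_right tens_equiv_refl)
  finally show ?thesis
    by simp
qed

lemma tlift_trel:
  assumes "\<And>x x' y. x \<in> M \<Longrightarrow> x' \<in> M \<Longrightarrow> y \<in> N \<Longrightarrow> f (x + x') y = f x y + f x' y"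
    and "\<And>x y y'. x \<in> M \<Longrightarrow> y \<in> N \<Longrightarrow> y' \<in> N \<Longrightarrow> f x (y + y') = f x y + f x y'"
    and "\<And>x r y. x \<in> M \<Longrightarrow> r \<in> R \<Longrightarrow> y \<in> N \<Longrightarrow> f (x * r) y = f x (r * y)"
    and "tens_equiv M R N s t"
  shows "tlift f s = tlift f t"
proof -
  have "s - t \<in> addspan (tgen M R N)"
    using assms(4) by (simp add: tens_equiv_def trel_def)
  then have "tlift f (s - t) = 0"
    by induction (auto simp: tgen_def tlift_add tlift_uminus tlift_diff assms(1-3))
  then show ?thesis
    by (simp add: tlift_diff)
qed

lemma tright_equiv:
  assumes "tens_equiv M R N s t" "\<And>y. y \<in> N \<Longrightarrow> y * a \<in> N"
  shows "tens_equiv M R N (tright s a) (tright t a)"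
proof -
  have "s - t \<in> addspan (tgen M R N)"
    using assms(1) by (simp add: tens_equiv_def trel_def)
  then have "tright (s - t) a \<in> addspan (tgen M R N)"
  proof induction
    case (addspan_base u)
    then have "tright u a \<in> tgen M R N"
    proof (cases rule: tgen_cases)
      case (add_left x x' y)
      then show ?thesis
        using tgen_add_leftI[of x M x' "y * a"] by (simp add: tright_diff assms(2))
    next
      case (add_right x y y')
      then show ?thesis
        using tgen_add_rightI[of x M "y * a" N "y' * a"] by (simp add: tright_diff assms(2) distrib_right)
    next
      case (balanced x r y)
      then show ?thesis
        using tgen_balancedI[of x M r R "y * a"] by (simp add: tright_diff assms(2) mult.assoc)
    qed
    then show ?case
      by (rule addspan.addspan_base)
  next
    case (addspan_neg u)
    then show ?case
      using addspan.addspan_neg tright_diff[of 0 u a] by simp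
  qed (simp_all add: tright_add addspan.intros)
  then show ?thesis
    by (simp add: tens_equiv_def trel_def tright_diff)
qed

lemma wedgeT_zero [simp]: "wedgeT 0 = 0"
  by (simp add: wedgeT_def)

lemma wedgeT_tens [simp]: "wedgeT (tens x y) = x * y"
  by (simp add: wedgeT_def)

lemma wedgeT_add: "wedgeT (s + t) = wedgeT s + wedgeT t"
  by (simp add: wedgeT_def tlift_add)

lemma wedgeT_diff: "wedgeT (s - t) = wedgeT s - wedgeT t"
  by (simp add: wedgeT_def tlift_diff)

lemma wedgeT_equiv: "tens_equiv M R N s t \<Longrightarrow> wedgeT s = wedgeT t"
  unfolding wedgeT_def by (rule tlift_trel) (simp_all add: distrib_left distrib_right mult.assoc)

lemma wedgeT_tright: "wedgeT (tright t a) = wedgeT t * a"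
proof -
  have "t \<in> tfree UNIV UNIV"
    by (simp add: tfree_def)
  then show ?thesis
    by (induction rule: tfree_induct) (simp_all add: wedgeT_def tright_diff tlift_diff mult.assoc left_diff_distrib)
qed

section \<open>Sums of tensors with central legs\<close>

definition map_coeff :: "('w \<Rightarrow> 'w) \<Rightarrow> ('w \<times> 'w \<times> 'w) list \<Rightarrow> ('w \<times> 'w \<times> 'w) list" where
  "map_coeff h xs = map (\<lambda>(z, z', e). (z, z', h e)) xs"

text \<open>A triple \<open>(z, z', e)\<close> encodes the tensor \<open>z \<otimes> z' e\<close>.\<close>

definition tens_list :: "('w::ring \<times> 'w \<times> 'w) list \<Rightarrow> 'w frtens" where
  "tens_list xs = (\<Sum>(z, z', e)\<leftarrow>xs. tens z (z' * e))"

definition alt_tens_list :: "('w::ring \<times> 'w \<times> 'w) list \<Rightarrow> 'w frtens" where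
  "alt_tens_list xs = (\<Sum>(z, z', e)\<leftarrow>xs. tens z (z' * e) - tens z' (z * e))"

lemma map_coeff_simps [simp]:
  "map_coeff h [] = []"
  "map_coeff h ((z, z', e) # xs) = (z, z', h e) # map_coeff h xs"
  "map_coeff h (xs @ ys) = map_coeff h xs @ map_coeff h ys"
  by (simp_all add: map_coeff_def)

lemma tens_list_simps [simp]:
  "tens_list [] = 0"
  "tens_list ((z, z', e) # xs) = tens z (z' * e) + tens_list xs"
  "tens_list (xs @ ys) = tens_list xs + tens_list ys"
  by (simp_all add: tens_list_def)

lemma alt_tens_list_simps [simp]:
  "alt_tens_list [] = 0"
  "alt_tens_list ((z, z', e) # xs) = (tens z (z' * e) - tens z' (z * e)) + alt_tens_list xs"
  by (simp_all add: alt_tens_list_def)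

lemma set_map_coeff_subset:
  "set xs \<subseteq> Z \<times> Z \<times> K \<Longrightarrow> (\<And>e. e \<in> K \<Longrightarrow> h e \<in> K) \<Longrightarrow> set (map_coeff h xs) \<subseteq> Z \<times> Z \<times> K"
  by (auto simp: map_coeff_def)

lemma tlift_alt_tens_list_commutator:
  assumes "set xs \<subseteq> Z \<times> Z \<times> K" "\<And>e. e \<in> K \<Longrightarrow> a * e - e * a \<in> K"
    and "\<And>z z' e. z \<in> Z \<Longrightarrow> z' \<in> Z \<Longrightarrow> e \<in> K \<Longrightarrow> f z (z' * e) = f z z' * e"
    and "\<And>z z'. z \<in> Z \<Longrightarrow> z' \<in> Z \<Longrightarrow> a * f z z' = f z z' * a"
  shows "tlift f (alt_tens_list (map_coeff (\<lambda>e. a * e - e * a) xs))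
    = a * tlift f (alt_tens_list xs) - tlift f (alt_tens_list xs) * a"
  using assms(1)
proof (induction xs)
  case (Cons x xs)
  obtain z z' e where x: "x = (z, z', e)" and z: "z \<in> Z" "z' \<in> Z" and e: "e \<in> K"
    using Cons.prems by (cases x) auto
  let ?c = "f z z' - f z' z" and ?T = "tlift f (alt_tens_list xs)"
  have "a * ?c = ?c * a"
    using assms(4)[OF z] assms(4)[OF z(2,1)] by (simp add: algebra_simps)
  then have commute: "a * (?c * e) = ?c * (a * e)"
    by (metis mult.assoc)
  have "tlift f (alt_tens_list (map_coeff (\<lambda>e. a * e - e * a) (x # xs)))
      = ?c * (a * e - e * a) + tlift f (alt_tens_list (map_coeff (\<lambda>e. a * e - e * a) xs))"
    using z e by (simp add: x tlift_add tlift_diff assms(2,3) left_diff_distrib)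
  also have "\<dots> = ?c * (a * e - e * a) + (a * ?T - ?T * a)"
    using Cons by simp
  also have "\<dots> = a * (?c * e + ?T) - (?c * e + ?T) * a"
    using commute by (simp add: algebra_simps)
  also have "?c * e + ?T = tlift f (alt_tens_list (x # xs))"
    using z e by (simp add: x tlift_add tlift_diff assms(3) left_diff_distrib)
  finally show ?case .
qed simp

lemma centre_ofD: "m \<in> centre_of M A \<Longrightarrow> m \<in> M" "m \<in> centre_of M A \<Longrightarrow> a \<in> A \<Longrightarrow> a * m = m * a"
  by (simp_all add: centre_of_def)

lemma centre_ofI: "m \<in> M \<Longrightarrow> (\<And>a. a \<in> A \<Longrightarrow> a * m = m * a) \<Longrightarrow> m \<in> centre_of M A"
  by (simp add: centre_of_def)

section \<open>The calculus and its central one-forms\<close>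

declare One_nat_def [simp del] \<comment> \<open>keep \<open>Om 1\<close> from turning into \<open>Om (Suc 0)\<close>\<close>

locale calculus =
  fixes Om :: "nat \<Rightarrow> 'w::ring_1 set" and d :: "'w \<Rightarrow> 'w" and c :: "complex \<Rightarrow> 'w"
  assumes diff_calculus: "diff_calculus Om d c"
begin

abbreviation ZA :: "'w set" where "ZA \<equiv> centre_of (Om 0) (Om 0)"
abbreviation ZE :: "'w set" where "ZE \<equiv> centre_of (Om 1) (Om 0)"
abbreviation TE :: "'w frtens set" where "TE \<equiv> tfree (Om 1) (Om 1)"
abbreviation tequiv :: "'w frtens \<Rightarrow> 'w frtens \<Rightarrow> bool" (infix "\<approx>" 50)
  where "s \<approx> t \<equiv> tens_equiv (Om 1) (Om 0) (Om 1) s t"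

lemma calculus_rules:
  "\<forall>j. 0 \<in> Om j \<and> (\<forall>x\<in>Om j. \<forall>y\<in>Om j. x + y \<in> Om j \<and> - x \<in> Om j)"
  "\<forall>i j. \<forall>x\<in>Om i. \<forall>y\<in>Om j. x * y \<in> Om (i + j)"
  "\<forall>j. \<forall>x\<in>Om j. d x \<in> Om (Suc j)"
  "\<forall>i. \<forall>x\<in>Om i. \<forall>y. d (x * y) = d x * y + (-1) ^ i * x * d y"
  "\<forall>z w. c (z + w) = c z + c w" "c 1 = 1"
  using diff_calculus unfolding diff_calculus_def by - (elim conjE; assumption)+

lemma Om_zero: "0 \<in> Om j"
  using calculus_rules(1) by blast

lemma Om_add: "x \<in> Om j \<Longrightarrow> y \<in> Om j \<Longrightarrow> x + y \<in> Om j"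
  using calculus_rules(1) by blast

lemma Om_uminus: "x \<in> Om j \<Longrightarrow> - x \<in> Om j"
  using calculus_rules(1) by blast

lemma Om_diff: "x \<in> Om j \<Longrightarrow> y \<in> Om j \<Longrightarrow> x - y \<in> Om j"
  using Om_add[OF _ Om_uminus, of x j y] by simp

lemma Om_mult: "x \<in> Om i \<Longrightarrow> y \<in> Om j \<Longrightarrow> x * y \<in> Om (i + j)"
  using calculus_rules(2) by blast

lemma Om0_mult_Om0: "a \<in> Om 0 \<Longrightarrow> b \<in> Om 0 \<Longrightarrow> a * b \<in> Om 0"
  using Om_mult[of a 0 b 0] by simp

lemma Om0_mult_Om1: "a \<in> Om 0 \<Longrightarrow> x \<in> Om 1 \<Longrightarrow> a * x \<in> Om 1"
  using Om_mult[of a 0 x 1] by simp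

lemma Om1_mult_Om0: "x \<in> Om 1 \<Longrightarrow> a \<in> Om 0 \<Longrightarrow> x * a \<in> Om 1"
  using Om_mult[of x 1 a 0] by simp

lemma Om1_mult_Om1: "x \<in> Om 1 \<Longrightarrow> y \<in> Om 1 \<Longrightarrow> x * y \<in> Om 2"
  using Om_mult[of x 1 y 1] by simp

lemma d_in_Om: "x \<in> Om j \<Longrightarrow> d x \<in> Om (Suc j)"
  using calculus_rules(3) by blast

lemma d_Om0: "a \<in> Om 0 \<Longrightarrow> d a \<in> Om 1"
  using d_in_Om[of a 0] by (simp add: One_nat_def)

lemma d_Om1: "x \<in> Om 1 \<Longrightarrow> d x \<in> Om 2"
  using d_in_Om[of x 1] by (simp add: numeral_2_eq_2 One_nat_def)

lemma d_mult: "x \<in> Om i \<Longrightarrow> d (x * y) = d x * y + (-1) ^ i * x * d y"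
  using calculus_rules(4) by blast

lemma d_mult_Om0: "a \<in> Om 0 \<Longrightarrow> d (a * y) = d a * y + a * d y"
  using d_mult[of a 0 y] by simp

lemma d_mult_Om1: "x \<in> Om 1 \<Longrightarrow> d (x * y) = d x * y - x * d y"
  using d_mult[of x 1 y] by simp

lemma self_add_self_eq_0:
  fixes x :: 'w
  assumes "x + x = 0"
  shows "x = 0"
proof -
  have "c (1/2) + c (1/2) = 1"
    using calculus_rules(5)[rule_format, of "1/2" "1/2"] calculus_rules(6) by simp
  then have "x = (x + x) * c (1/2)"
    by (metis distrib_left distrib_right mult.right_neutral)
  then show "x = 0"
    using assms by simp
qed

lemma ZA_add:
  assumes "x \<in> ZA" "y \<in> ZA"
  shows "x + y \<in> ZA"
proof (rule centre_ofI)
  show "x + y \<in> Om 0"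
    using assms by (simp add: centre_ofD Om_add)
  fix a
  assume "a \<in> Om 0"
  then show "a * (x + y) = (x + y) * a"
    using centre_ofD(2)[OF assms(1)] centre_ofD(2)[OF assms(2)] by (simp add: distrib_left distrib_right)
qed

lemma ZA_diff:
  assumes "x \<in> ZA" "y \<in> ZA"
  shows "x - y \<in> ZA"
proof (rule centre_ofI)
  show "x - y \<in> Om 0"
    using assms by (simp add: centre_ofD Om_diff)
  fix a
  assume "a \<in> Om 0"
  then show "a * (x - y) = (x - y) * a"
    using centre_ofD(2)[OF assms(1)] centre_ofD(2)[OF assms(2)] by (simp add: left_diff_distrib right_diff_distrib)
qed

lemma wedgeT_Om2: "t \<in> TE \<Longrightarrow> wedgeT t \<in> Om 2"
  by (induction rule: tfree_induct) (simp_all add: Om_zero Om1_mult_Om1 wedgeT_diff Om_diff)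

lemma wedgeT_alt_tens_list_commutator:
  assumes "set xs \<subseteq> ZE \<times> ZE \<times> Om 0" "a \<in> Om 0"
  shows "wedgeT (alt_tens_list (map_coeff (\<lambda>e. a * e - e * a) xs))
    = a * wedgeT (alt_tens_list xs) - wedgeT (alt_tens_list xs) * a"
  unfolding wedgeT_def
proof (rule tlift_alt_tens_list_commutator[OF assms(1)])
  fix z z' assume "z \<in> ZE" "z' \<in> ZE"
  then show "a * (z * z') = z * z' * a"
    using assms(2) by (metis centre_ofD(2) mult.assoc)
qed (simp_all add: assms(2) Om_diff Om0_mult_Om0 mult.assoc)

lemma Phi_Om1:
  assumes fg: "fg_projective Om n p iota" and j: "j < n"
  shows "Phi Om n p iota j \<in> Om 1"
proof -
  let ?v = "\<lambda>k. if k < n then p k j else 0"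
  have "(\<Sum>k<n. p i k * ?v k) = ?v i" if i: "i < n" for i
  proof -
    have "(\<Sum>k<n. p i k * ?v k) = (\<Sum>k<n. p i k * p k j)"
      by (rule sum.cong) simp_all
    also have "\<dots> = p i j"
      using fg i j unfolding fg_projective_def by blast
    finally show ?thesis
      using i by simp
  qed
  then have "?v \<in> pA_n Om n p"
    using fg j unfolding fg_projective_def pA_n_def by auto
  then have "?v \<in> iota ` Om 1"
    using fg unfolding fg_projective_def by (simp add: bij_betw_def)
  then show ?thesis
    unfolding Phi_def by (rule inv_into_into)
qed

lemma iota_Om0: "fg_projective Om n p iota \<Longrightarrow> x \<in> Om 1 \<Longrightarrow> j < n \<Longrightarrow> iota x j \<in> Om 0"
  unfolding fg_projective_def pA_n_def bij_betw_def by auto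

lemma nablaGr_tfree: "fg_projective Om n p iota \<Longrightarrow> x \<in> Om 1 \<Longrightarrow> nablaGr Om d n p iota x \<in> TE"
  unfolding nablaGr_def by (intro tfree_sum) (simp_all add: Phi_Om1 d_Om0 iota_Om0)

end

locale central_calculus = calculus Om d c
  for Om :: "nat \<Rightarrow> 'w::ring_1 set" and d c +
  assumes central_basis: "cond_central_basis Om"
begin

lemma one_form_induct [consumes 1, case_names zero diff central]:
  assumes "x \<in> Om 1" and "P 0"
    and "\<And>u v. u \<in> Om 1 \<Longrightarrow> v \<in> Om 1 \<Longrightarrow> P u \<Longrightarrow> P v \<Longrightarrow> P (u - v)"
    and "\<And>z r. z \<in> ZE \<Longrightarrow> r \<in> Om 0 \<Longrightarrow> P (z * r)"
  shows "P x"
proof -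
  obtain t where t: "t \<in> tfree ZE (Om 0)" and x: "x = wedgeT t"
    using central_basis assms(1) unfolding cond_central_basis_def Let_def by metis
  from t have "wedgeT t \<in> Om 1 \<and> P (wedgeT t)"
  proof (induction rule: tfree_induct)
    case zero
    then show ?case
      by (simp add: Om_zero assms(2))
  next
    case (tens z r)
    then show ?case
      by (simp add: Om1_mult_Om0 centre_ofD assms(4))
  next
    case (diff s t)
    then show ?case
      by (simp add: wedgeT_diff Om_diff assms(3))
  qed
  then show ?thesis
    by (simp add: x)
qed

lemma ZA_commute_Om1:
  assumes "z \<in> ZA" "x \<in> Om 1"
  shows "z * x = x * z"
  using assms(2)
proof (induction rule: one_form_induct)
  case (diff u v)
  then show ?case
    by (simp add: algebra_simps)
next
  case (central w r)
  have "z * (w * r) = w * (z * r)"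
    using centre_ofD(2)[OF central(1) centre_ofD(1)[OF assms(1)]] by (metis mult.assoc)
  also have "\<dots> = w * r * z"
    using centre_ofD(2)[OF assms(1) central(2)] by (simp add: mult.assoc)
  finally show ?case .
qed simp

lemma d_ZA:
  assumes "z \<in> ZA"
  shows "d z \<in> ZE"
proof (rule centre_ofI)
  show "d z \<in> Om 1"
    using assms by (simp add: centre_ofD d_Om0)
  fix a
  assume a: "a \<in> Om 0"
  have "d (a * z) = d (z * a)"
    using centre_ofD(2)[OF assms a] by simp
  moreover have "z * d a = d a * z"
    using ZA_commute_Om1[OF assms d_Om0[OF a]] .
  ultimately show "a * d z = d z * a"
    using a assms by (simp add: d_mult_Om0 centre_ofD)
qed

abbreviation central_triples
  where "central_triples \<equiv> ZE \<times> ZE \<times> Om 0"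

lemma tens_list_tfree: "set xs \<subseteq> central_triples \<Longrightarrow> tens_list xs \<in> TE"
  by (induction xs) (auto simp: tfree_add Om1_mult_Om0 centre_ofD)

lemma tens_list_diff:
  assumes "set xs \<subseteq> central_triples" "set ys \<subseteq> central_triples"
  shows "tens_list xs - tens_list ys \<approx> tens_list (xs @ map_coeff uminus ys)"
proof -
  have "tens_list (map_coeff uminus ys) \<approx> - tens_list ys"
    using assms(2)
  proof (induction ys)
    case (Cons y ys)
    obtain z z' e where y: "y = (z, z', e)" and "z \<in> ZE" "z' \<in> ZE" "e \<in> Om 0"
      using Cons.prems by (cases y) auto
    then have "tens z (z' * - e) \<approx> - tens z (z' * e)"
      using tens_uminus_right[of z "Om 1" "z' * e"]
      by (simp add: centre_ofD Om1_mult_Om0 Om_uminus Om_zero)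
    moreover have "tens_list (map_coeff uminus ys) \<approx> - tens_list ys"
      using Cons by simp
    ultimately have "tens z (z' * - e) + tens_list (map_coeff uminus ys) \<approx> - tens z (z' * e) + - tens_list ys"
      by (rule tens_equiv_add)
    then show ?case
      by (simp add: y)
  qed simp
  then have "tens_list xs + tens_list (map_coeff uminus ys) \<approx> tens_list xs + - tens_list ys"
    by (rule tens_equiv_add[OF tens_equiv_refl])
  then show ?thesis
    using tens_equiv_sym by simp
qed

lemma diff_equiv_tens_list:
  assumes "set xs \<subseteq> central_triples" "s \<approx> tens_list xs"
    and "set ys \<subseteq> central_triples" "t \<approx> tens_list ys"
  shows "\<exists>zs. set zs \<subseteq> central_triples \<and> s - t \<approx> tens_list zs"
proof (intro exI conjI)
  show "set (xs @ map_coeff uminus ys) \<subseteq> central_triples"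
    using assms(1,3) set_map_coeff_subset[of ys] by (simp add: Om_uminus)
  have "s - t \<approx> tens_list xs - tens_list ys"
    using assms(2,4) by (rule tens_equiv_diff)
  also have "\<dots> \<approx> tens_list (xs @ map_coeff uminus ys)"
    using assms(1,3) by (rule tens_list_diff)
  finally show "s - t \<approx> tens_list (xs @ map_coeff uminus ys)" .
qed

lemma central_tens_equiv_tens_list:
  assumes "z \<in> ZE" "y \<in> Om 1"
  shows "\<exists>xs. set xs \<subseteq> central_triples \<and> tens z y \<approx> tens_list xs"
  using assms(2)
proof (induction rule: one_form_induct)
  case zero
  have "tens z 0 \<approx> tens_list []"
    using assms(1) by (simp add: tens_zero_right centre_ofD Om_zero)
  then show ?case
    by (intro exI[of _ "[]"]) simp
next
  case (diff u v)
  then obtain xs ys where "set xs \<subseteq> central_triples" "tens z u \<approx> tens_list xs"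
    and "set ys \<subseteq> central_triples" "tens z v \<approx> tens_list ys"
    by blast
  then obtain zs where zs: "set zs \<subseteq> central_triples" "tens z u - tens z v \<approx> tens_list zs"
    using diff_equiv_tens_list by blast
  have "tens z (u - v) \<approx> tens z u - tens z v"
    using assms(1) diff by (intro tens_diff_right) (simp_all add: centre_ofD Om_diff)
  with zs show ?case
    using tens_equiv_trans by blast
next
  case (central z' r)
  then show ?case
    using assms(1) by (intro exI[of _ "[(z, z', r)]"]) simp
qed

lemma tens_equiv_tens_list:
  assumes "x \<in> Om 1" "y \<in> Om 1"
  shows "\<exists>xs. set xs \<subseteq> central_triples \<and> tens x y \<approx> tens_list xs"
  using assms(1)
proof (induction rule: one_form_induct)
  case zero
  have "tens 0 y \<approx> tens_list []"
    using assms(2) by (simp add: tens_zero_left Om_zero)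
  then show ?case
    by (intro exI[of _ "[]"]) simp
next
  case (diff u v)
  then obtain xs ys where "set xs \<subseteq> central_triples" "tens u y \<approx> tens_list xs"
    and "set ys \<subseteq> central_triples" "tens v y \<approx> tens_list ys"
    by blast
  then obtain zs where zs: "set zs \<subseteq> central_triples" "tens u y - tens v y \<approx> tens_list zs"
    using diff_equiv_tens_list by blast
  have "tens (u - v) y \<approx> tens u y - tens v y"
    using assms(2) diff by (intro tens_diff_left) (simp_all add: Om_diff)
  with zs show ?case
    using tens_equiv_trans by blast
next
  case (central z r)
  then have "tens (z * r) y \<approx> tens z (r * y)"
    using assms(2) by (intro tens_balanced) (simp_all add: centre_ofD)
  moreover obtain xs where "set xs \<subseteq> central_triples" "tens z (r * y) \<approx> tens_list xs"
    using central_tens_equiv_tens_list central assms(2) Om0_mult_Om1 by blast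
  ultimately show ?case
    using tens_equiv_trans by blast
qed

lemma tfree_equiv_tens_list:
  assumes "t \<in> TE"
  shows "\<exists>xs. set xs \<subseteq> central_triples \<and> t \<approx> tens_list xs"
  using assms
proof (induction rule: tfree_induct)
  case zero
  then show ?case
    by (intro exI[of _ "[]"]) simp
next
  case (tens x y)
  then show ?case
    by (rule tens_equiv_tens_list)
next
  case (diff s t)
  then show ?case
    using diff_equiv_tens_list by blast
qed

end

section \<open>The flip and the antisymmetrisation\<close>

locale split_calculus = central_calculus Om d c
  for Om :: "nat \<Rightarrow> 'w::ring_1 set" and d c +
  fixes F :: "'w frtens set" and psym :: "'w frtens \<Rightarrow> 'w frtens"
  assumes split: "cond_split Om F psym" and flip: "cond_flip Om psym"
begin

abbreviation sigma :: "'w frtens \<Rightarrow> 'w frtens" where "sigma \<equiv> sigmaT psym"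

lemma split_rules:
  "F \<subseteq> TE"
  "\<forall>x\<in>F. \<forall>a\<in>Om 0. tright x a \<in> F"
  "\<forall>w\<in>Om 2. \<exists>f\<in>F. wedgeT f = w"
  "\<forall>x\<in>TE. psym x \<in> TE"
  "\<forall>x\<in>TE. \<forall>y\<in>TE. psym (x + y) - (psym x + psym y) \<in> trel (Om 1) (Om 0) (Om 1)"
  "\<forall>x\<in>trel (Om 1) (Om 0) (Om 1). psym x \<in> trel (Om 1) (Om 0) (Om 1)"
  "\<forall>x\<in>TE. psym (psym x) - psym x \<in> trel (Om 1) (Om 0) (Om 1)"
  "\<forall>x\<in>TE. wedgeT (psym x) = 0"
  "\<forall>k\<in>TE. wedgeT k = 0 \<longrightarrow> (\<exists>x\<in>TE. psym x - k \<in> trel (Om 1) (Om 0) (Om 1))"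
  "\<forall>x\<in>TE. psym x \<in> trel (Om 1) (Om 0) (Om 1) \<longleftrightarrow> x \<in> F"
  using split unfolding cond_split_def Let_def by - (elim conjE; assumption)+

lemma F_tfree: "f \<in> F \<Longrightarrow> f \<in> TE"
  using split_rules(1) by blast

lemma F_tright: "f \<in> F \<Longrightarrow> a \<in> Om 0 \<Longrightarrow> tright f a \<in> F"
  using split_rules(2) by blast

lemma psym_tfree: "x \<in> TE \<Longrightarrow> psym x \<in> TE"
  using split_rules(4) by blast

lemma psym_add: "x \<in> TE \<Longrightarrow> y \<in> TE \<Longrightarrow> psym (x + y) \<approx> psym x + psym y"
  using split_rules(5) by (simp add: tens_equiv_def)

lemma psym_equiv_0: "x \<approx> 0 \<Longrightarrow> psym x \<approx> 0"
  using split_rules(6) by (simp add: tens_equiv_def)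

lemma psym_idem: "x \<in> TE \<Longrightarrow> psym (psym x) \<approx> psym x"
  using split_rules(7) by (simp add: tens_equiv_def)

lemma wedgeT_psym: "x \<in> TE \<Longrightarrow> wedgeT (psym x) = 0"
  using split_rules(8) by blast

lemma psym_onto_ker: "k \<in> TE \<Longrightarrow> wedgeT k = 0 \<Longrightarrow> \<exists>x\<in>TE. psym x \<approx> k"
  using split_rules(9) by (simp add: tens_equiv_def)

lemma psym_equiv_0_iff: "x \<in> TE \<Longrightarrow> psym x \<approx> 0 \<longleftrightarrow> x \<in> F"
  using split_rules(10) by (simp add: tens_equiv_def)

lemma psym_diff:
  assumes "x \<in> TE" "y \<in> TE"
  shows "psym (x - y) \<approx> psym x - psym y"
proof -
  have "psym x \<approx> psym (x - y) + psym y"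
    using psym_add[of "x - y" y] assms by (simp add: tfree_diff)
  then have "psym x - psym y \<approx> psym (x - y) + psym y - psym y"
    by (rule tens_equiv_diff) simp
  then have "psym x - psym y \<approx> psym (x - y)"
    by simp
  then show ?thesis
    by (rule tens_equiv_sym)
qed

lemma psym_cong:
  assumes "x \<in> TE" "y \<in> TE" "x \<approx> y"
  shows "psym x \<approx> psym y"
proof -
  have "psym x - psym y \<approx> psym (x - y)"
    using psym_diff[OF assms(1,2)] by (rule tens_equiv_sym)
  also have "\<dots> \<approx> 0"
    using assms(3) by (simp add: psym_equiv_0 flip: tens_equiv_iff_diff)
  finally show ?thesis
    by (simp flip: tens_equiv_iff_diff)
qed

lemma psym_fix_ker:
  assumes "k \<in> TE" "wedgeT k = 0"
  shows "psym k \<approx> k"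
proof -
  obtain x where x: "x \<in> TE" "psym x \<approx> k"
    using psym_onto_ker[OF assms] by blast
  have "psym k \<approx> psym (psym x)"
    using assms(1) psym_tfree[OF x(1)] tens_equiv_sym[OF x(2)] by (rule psym_cong)
  also have "\<dots> \<approx> psym x"
    using x(1) by (rule psym_idem)
  also have "\<dots> \<approx> k"
    by (rule x(2))
  finally show ?thesis .
qed

lemma tright_TE: "x \<in> TE \<Longrightarrow> e \<in> Om 0 \<Longrightarrow> tright x e \<in> TE"
  by (simp add: tright_tfree Om1_mult_Om0)

lemma psym_tright:
  assumes x: "x \<in> TE" and e: "e \<in> Om 0"
  shows "psym (tright x e) \<approx> tright (psym x) e"
proof -
  txt \<open>Split \<open>x = k + f\<close> with \<open>k = psym x \<in> ker \<wedge>\<close> (fixed by \<open>psym\<close>) and \<open>f \<in> F\<close> (killed by \<open>psym\<close>);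
    both parts keep their property under right multiplication.\<close>
  define k where "k = psym x"
  define f where "f = x - k"
  have k: "k \<in> TE" and f: "f \<in> TE"
    using x by (simp_all add: k_def f_def psym_tfree tfree_diff)
  have "psym f \<approx> psym x - psym k"
    unfolding f_def using x k by (rule psym_diff)
  also have "\<dots> \<approx> 0"
    using tens_equiv_sym[OF psym_idem[OF x]] by (simp add: k_def flip: tens_equiv_iff_diff)
  finally have "f \<in> F"
    using f psym_equiv_0_iff by blast
  then have fe: "psym (tright f e) \<approx> 0"
    using e by (simp add: F_tright F_tfree psym_equiv_0_iff)
  have ke: "psym (tright k e) \<approx> tright k e"
    using k e by (intro psym_fix_ker tright_TE) (simp_all add: wedgeT_tright k_def wedgeT_psym x)
  have "psym (tright x e) = psym (tright k e + tright f e)"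
    by (simp add: f_def flip: tright_add)
  also have "\<dots> \<approx> psym (tright k e) + psym (tright f e)"
    using k f e by (intro psym_add tright_TE)
  also have "\<dots> \<approx> tright k e + 0"
    using ke fe by (rule tens_equiv_add)
  finally show ?thesis
    by (simp add: k_def)
qed

lemma sigma_tfree: "x \<in> TE \<Longrightarrow> sigma x \<in> TE"
  by (simp add: sigmaT_def psym_tfree tfree_add tfree_diff)

lemma wedgeT_sigma: "x \<in> TE \<Longrightarrow> wedgeT (sigma x) = - wedgeT x"
  by (simp add: sigmaT_def wedgeT_add wedgeT_diff wedgeT_psym)

lemma sigma_cong: "x \<in> TE \<Longrightarrow> y \<in> TE \<Longrightarrow> x \<approx> y \<Longrightarrow> sigma x \<approx> sigma y"
  unfolding sigmaT_def by (intro tens_equiv_diff tens_equiv_add psym_cong)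

lemma sigma_add: "x \<in> TE \<Longrightarrow> y \<in> TE \<Longrightarrow> sigma (x + y) \<approx> sigma x + sigma y"
  using tens_equiv_diff[OF tens_equiv_add[OF psym_add psym_add] tens_equiv_refl, of x y x y "x + y"]
  by (simp add: sigmaT_def algebra_simps)

lemma sigma_diff: "x \<in> TE \<Longrightarrow> y \<in> TE \<Longrightarrow> sigma (x - y) \<approx> sigma x - sigma y"
  using tens_equiv_diff[OF tens_equiv_add[OF psym_diff psym_diff] tens_equiv_refl, of x y x y "x - y"]
  by (simp add: sigmaT_def algebra_simps)

lemma sigma_fix_ker: "k \<in> TE \<Longrightarrow> wedgeT k = 0 \<Longrightarrow> sigma k \<approx> k"
  using tens_equiv_diff[OF tens_equiv_add[OF psym_fix_ker psym_fix_ker] tens_equiv_refl, of k k k]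
  by (simp add: sigmaT_def)

lemma sigma_zero: "sigma 0 \<approx> 0"
  using sigma_fix_ker[of 0] by simp

lemma sigma_tright:
  assumes "x \<in> TE" "e \<in> Om 0"
  shows "sigma (tright x e) \<approx> tright (sigma x) e"
  using tens_equiv_diff[OF tens_equiv_add[OF psym_tright psym_tright] tens_equiv_refl, of x e x e "tright x e"] assms
  by (simp add: sigmaT_def tright_add tright_diff)

lemma sigma_flip: "z \<in> ZE \<Longrightarrow> z' \<in> ZE \<Longrightarrow> sigma (tens z z') \<approx> tens z' z"
  using flip unfolding cond_flip_def tens_equiv_def by blast

lemma sigma_central_tens:
  assumes "z \<in> ZE" "z' \<in> ZE" "e \<in> Om 0"
  shows "sigma (tens z (z' * e)) \<approx> tens z' (z * e)"
proof -
  have "sigma (tens z (z' * e)) = sigma (tright (tens z z') e)"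
    by simp
  also have "\<dots> \<approx> tright (sigma (tens z z')) e"
    using assms by (intro sigma_tright) (simp_all add: centre_ofD)
  also have "\<dots> \<approx> tright (tens z' z) e"
    using assms by (intro tright_equiv sigma_flip) (simp_all add: Om1_mult_Om0)
  finally show ?thesis
    by simp
qed

lemma ZE_anticommute:
  assumes "z \<in> ZE" "z' \<in> ZE"
  shows "z * z' = - (z' * z)"
proof -
  have "- (z * z') = z' * z"
    using wedgeT_equiv[OF sigma_flip[OF assms]] wedgeT_sigma[of "tens z z'"] assms
    by (simp add: centre_ofD)
  then show ?thesis
    by (metis minus_minus)
qed

lemma ZE_anticommute_Om1:
  assumes "w \<in> ZE" "x \<in> Om 1"
  shows "w * x = - (x * w)"
  using assms(2)
proof (induction rule: one_form_induct)
  case (diff u v)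
  then show ?case
    by (simp add: algebra_simps)
next
  case (central z r)
  have "w * (z * r) = - (z * w * r)"
    using ZE_anticommute[OF assms(1) central(1)] by (simp flip: mult.assoc)
  also have "\<dots> = - (z * r * w)"
    using centre_ofD(2)[OF assms(1) central(2)] by (simp add: mult.assoc)
  finally show ?case .
qed simp

lemma d_ZE_commute:
  assumes w: "w \<in> ZE" and a: "a \<in> Om 0"
  shows "a * d w = d w * a"
proof -
  have "d w * a - w * d a = d (w * a)"
    using w by (simp add: d_mult_Om1 centre_ofD)
  also have "\<dots> = d (a * w)"
    using centre_ofD(2)[OF w a] by simp
  also have "\<dots> = d a * w + a * d w"
    using a by (simp add: d_mult_Om0)
  finally show ?thesis
    using ZE_anticommute_Om1[OF w d_Om0[OF a]] by (simp add: algebra_simps)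
qed

lemma alt_tens_list_tfree: "set xs \<subseteq> central_triples \<Longrightarrow> alt_tens_list xs \<in> TE"
  by (induction xs) (auto simp: tfree_add tfree_diff Om1_mult_Om0 centre_ofD)

lemma tens_list_alt:
  "set xs \<subseteq> central_triples \<Longrightarrow> tens_list xs - sigma (tens_list xs) \<approx> alt_tens_list xs"
proof (induction xs)
  case (Cons x xs)
  obtain z z' e where x: "x = (z, z', e)" and zz: "z \<in> ZE" "z' \<in> ZE" and e: "e \<in> Om 0"
    using Cons.prems by (cases x) auto
  let ?t = "tens z (z' * e)" and ?t' = "tens z' (z * e)" and ?T = "tens_list xs"
  have TE: "?t \<in> TE" "?T \<in> TE"
    using zz e Cons.prems by (simp_all add: Om1_mult_Om0 centre_ofD tens_list_tfree)
  have "sigma (?t + ?T) \<approx> sigma ?t + sigma ?T"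
    using TE by (rule sigma_add)
  also have "\<dots> \<approx> ?t' + sigma ?T"
    using zz e by (intro tens_equiv_add sigma_central_tens tens_equiv_refl)
  finally have "(?t + ?T) - sigma (?t + ?T) \<approx> (?t + ?T) - (?t' + sigma ?T)"
    by (rule tens_equiv_diff[OF tens_equiv_refl])
  also have "\<dots> = (?t - ?t') + (?T - sigma ?T)"
    by (simp add: algebra_simps)
  also have "\<dots> \<approx> (?t - ?t') + alt_tens_list xs"
    using Cons by (intro tens_equiv_add tens_equiv_refl) simp
  finally show ?case
    by (simp add: x)
qed (use tens_equiv_uminus[OF sigma_zero] in simp)

lemma sigma_alt_tens_list: "set xs \<subseteq> central_triples \<Longrightarrow> sigma (alt_tens_list xs) \<approx> - alt_tens_list xs"
proof (induction xs)
  case Nil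
  show ?case
    using sigma_zero by simp
next
  case (Cons x xs)
  obtain z z' e where x: "x = (z, z', e)" and zz: "z \<in> ZE" "z' \<in> ZE" and e: "e \<in> Om 0"
    using Cons.prems by (cases x) auto
  let ?t = "tens z (z' * e)" and ?t' = "tens z' (z * e)" and ?A = "alt_tens_list xs"
  have TE: "?t \<in> TE" "?t' \<in> TE" "?A \<in> TE"
    using zz e Cons.prems by (simp_all add: Om1_mult_Om0 centre_ofD alt_tens_list_tfree)
  have "sigma ((?t - ?t') + ?A) \<approx> sigma (?t - ?t') + sigma ?A"
    using TE by (intro sigma_add tfree_diff)
  also have "\<dots> \<approx> (sigma ?t - sigma ?t') + - ?A"
    using TE Cons by (intro tens_equiv_add sigma_diff) simp_all
  also have "\<dots> \<approx> (?t' - ?t) + - ?A"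
    using zz e by (intro tens_equiv_add tens_equiv_diff sigma_central_tens tens_equiv_refl)
  finally show ?case
    by (simp add: x algebra_simps)
qed

lemma alt_tens_list_ker:
  assumes "set xs \<subseteq> central_triples" "wedgeT (alt_tens_list xs) = 0"
  shows "alt_tens_list xs + alt_tens_list xs \<approx> 0"
proof -
  have "alt_tens_list xs \<approx> sigma (alt_tens_list xs)"
    using assms by (rule tens_equiv_sym[OF sigma_fix_ker[OF alt_tens_list_tfree]])
  also have "\<dots> \<approx> - alt_tens_list xs"
    using assms(1) by (rule sigma_alt_tens_list)
  finally have "alt_tens_list xs - - alt_tens_list xs \<approx> 0"
    by (rule tens_equiv_iff_diff[THEN iffD1])
  then show ?thesis
    by simp
qed

lemma Qinv: "w \<in> Om 2 \<Longrightarrow> Qinv F w \<in> F \<and> wedgeT (Qinv F w) = w"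
  unfolding Qinv_def by (rule someI_ex) (use split_rules(3) in blast)

lemma nabla0_tfree:
  assumes "fg_projective Om n p iota" "x \<in> Om 1"
  shows "nabla0 Om d n p iota F x \<in> TE"
proof -
  have "wedgeT (nablaGr Om d n p iota x) + d x \<in> Om 2"
    using assms by (intro Om_add wedgeT_Om2 nablaGr_tfree d_Om1)
  then have "Qinv F (wedgeT (nablaGr Om d n p iota x) + d x) \<in> TE"
    using Qinv F_tfree by blast
  then show ?thesis
    using assms unfolding nabla0_def by (intro tfree_diff nablaGr_tfree)
qed

lemma wedgeT_nabla0:
  assumes "fg_projective Om n p iota" "x \<in> Om 1"
  shows "wedgeT (nabla0 Om d n p iota F x) = - d x"
proof -
  have "wedgeT (nablaGr Om d n p iota x) + d x \<in> Om 2"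
    using assms by (intro Om_add wedgeT_Om2 nablaGr_tfree d_Om1)
  then show ?thesis
    unfolding nabla0_def by (simp add: wedgeT_diff Qinv)
qed

end

section \<open>The metric\<close>

locale metric_calculus = split_calculus Om d c F psym
  for Om :: "nat \<Rightarrow> 'w::ring_1 set" and d c F psym +
  fixes g :: "'w \<Rightarrow> 'w \<Rightarrow> 'w"
  assumes metric: "pseudo_riem_metric Om psym g"
begin

lemma metric_rules:
  "\<forall>x\<in>Om 1. \<forall>y\<in>Om 1. g x y \<in> Om 0"
  "\<forall>x\<in>Om 1. \<forall>y\<in>Om 1. \<forall>y'\<in>Om 1. g x (y + y') = g x y + g x y'"
  "\<forall>x\<in>Om 1. \<forall>y\<in>Om 1. \<forall>a\<in>Om 0. g (x * a) y = g x (a * y)"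
  "\<forall>x\<in>Om 1. \<forall>y\<in>Om 1. \<forall>a\<in>Om 0. g (a * x) y = a * g x y"
  "\<forall>x\<in>Om 1. \<forall>y\<in>Om 1. \<forall>a\<in>Om 0. g x (y * a) = g x y * a"
  using metric unfolding pseudo_riem_metric_def by - (elim conjE; assumption)+

lemma g_Om0: "x \<in> Om 1 \<Longrightarrow> y \<in> Om 1 \<Longrightarrow> g x y \<in> Om 0"
  using metric_rules(1) by blast

lemma g_add_right: "x \<in> Om 1 \<Longrightarrow> y \<in> Om 1 \<Longrightarrow> y' \<in> Om 1 \<Longrightarrow> g x (y + y') = g x y + g x y'"
  using metric_rules(2) by blast

lemma g_mult_right: "x \<in> Om 1 \<Longrightarrow> y \<in> Om 1 \<Longrightarrow> a \<in> Om 0 \<Longrightarrow> g x (y * a) = g x y * a"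
  using metric_rules(5) by blast

lemma g_ZE_mult_left:
  assumes "x \<in> ZE" "y \<in> Om 1" "a \<in> Om 0"
  shows "g x (a * y) = a * g x y"
proof -
  have "g x (a * y) = g (x * a) y"
    using metric_rules(3) assms by (simp add: centre_ofD)
  also have "\<dots> = g (a * x) y"
    using centre_ofD(2)[OF assms(1,3)] by simp
  also have "\<dots> = a * g x y"
    using metric_rules(4) assms by (simp add: centre_ofD)
  finally show ?thesis .
qed

lemma g_ZA:
  assumes "x \<in> ZE" "y \<in> ZE"
  shows "g x y \<in> ZA"
proof (rule centre_ofI)
  show "g x y \<in> Om 0"
    using assms by (simp add: g_Om0 centre_ofD)
  fix a
  assume a: "a \<in> Om 0"
  have "a * g x y = g x (a * y)"
    using assms a by (simp add: g_ZE_mult_left centre_ofD)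
  also have "\<dots> = g x y * a"
    using assms a by (simp add: centre_ofD(2)[OF assms(2) a] g_mult_right centre_ofD)
  finally show "a * g x y = g x y * a" .
qed

lemma Gmap_add: "Gmap g x y (s + t) = Gmap g x y s + Gmap g x y t"
  by (simp add: Gmap_def tlift_add)

lemma Gmap_equiv:
  assumes "x \<in> Om 1" "y \<in> ZE" "s \<approx> t"
  shows "Gmap g x y s = Gmap g x y t"
  unfolding Gmap_def using assms
  by (intro tlift_trel)
     (simp_all add: g_add_right g_mult_right g_ZE_mult_left centre_ofD distrib_left distrib_right mult.assoc)

lemma Gmap_Om0:
  assumes "x \<in> Om 1" "y \<in> Om 1" "t \<in> TE"
  shows "Gmap g x y t \<in> Om 0"
  using assms(3)
  by (induction rule: tfree_induct) (simp_all add: Gmap_def tlift_diff Om_zero Om_diff Om0_mult_Om0 g_Om0 assms(1,2))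

lemma Gmap_alt_tens_list_commutator:
  assumes "x \<in> ZE" "y \<in> ZE" "set xs \<subseteq> central_triples" "a \<in> Om 0"
  shows "Gmap g x y (alt_tens_list (map_coeff (\<lambda>e. a * e - e * a) xs))
    = a * Gmap g x y (alt_tens_list xs) - Gmap g x y (alt_tens_list xs) * a"
  unfolding Gmap_def
proof (rule tlift_alt_tens_list_commutator[OF assms(3)])
  fix z z' assume "z \<in> ZE" "z' \<in> ZE"
  then have "g x z \<in> ZA" "g y z' \<in> ZA"
    using assms(1,2) by (simp_all add: g_ZA)
  then show "a * (g x z * g y z') = g x z * g y z' * a"
    using assms(4) by (metis centre_ofD(2) mult.assoc)
qed (use assms in \<open>simp_all add: Om_diff Om0_mult_Om0 g_mult_right centre_ofD mult.assoc\<close>)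

lemma Gmap_alt_tens_list_ZA:
  assumes x: "x \<in> ZE" and y: "y \<in> ZE" and xs: "set xs \<subseteq> central_triples"
    and wedge_central: "\<And>a. a \<in> Om 0 \<Longrightarrow> a * wedgeT (alt_tens_list xs) = wedgeT (alt_tens_list xs) * a"
  shows "Gmap g x y (alt_tens_list xs) \<in> ZA"
proof (rule centre_ofI)
  show "Gmap g x y (alt_tens_list xs) \<in> Om 0"
    using x y xs by (simp add: Gmap_Om0 alt_tens_list_tfree centre_ofD)
  fix a
  assume a: "a \<in> Om 0"
  let ?B = "alt_tens_list (map_coeff (\<lambda>e. a * e - e * a) xs)"
  have B: "set (map_coeff (\<lambda>e. a * e - e * a) xs) \<subseteq> central_triples"
    using xs a by (simp add: set_map_coeff_subset Om_diff Om0_mult_Om0)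
  have "wedgeT ?B = 0"
    using wedgeT_alt_tens_list_commutator[OF xs a] wedge_central[OF a] by simp
  then have "Gmap g x y (?B + ?B) = Gmap g x y 0"
    using x y B by (intro Gmap_equiv alt_tens_list_ker) (simp_all add: centre_ofD)
  then have "Gmap g x y ?B + Gmap g x y ?B = 0"
    using Gmap_add[of x y ?B ?B] by (simp add: Gmap_def)
  then have "Gmap g x y ?B = 0"
    by (rule self_add_self_eq_0)
  then show "a * Gmap g x y (alt_tens_list xs) = Gmap g x y (alt_tens_list xs) * a"
    using Gmap_alt_tens_list_commutator[OF x y xs a] by simp
qed

lemma Gmap_alt_ZA:
  assumes x: "x \<in> ZE" and y: "y \<in> ZE" and t: "t \<in> TE"
    and wedge_central: "\<And>a. a \<in> Om 0 \<Longrightarrow> a * wedgeT t = wedgeT t * a"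
  shows "Gmap g x y (t - sigma t) \<in> ZA"
proof -
  obtain xs where xs: "set xs \<subseteq> central_triples" "t \<approx> tens_list xs"
    using tfree_equiv_tens_list[OF t] by blast
  have "t - sigma t \<approx> tens_list xs - sigma (tens_list xs)"
    using t xs by (intro tens_equiv_diff sigma_cong sigma_tfree tens_list_tfree)
  also have "\<dots> \<approx> alt_tens_list xs"
    using xs(1) by (rule tens_list_alt)
  finally have alt: "t - sigma t \<approx> alt_tens_list xs" .
  have "wedgeT (alt_tens_list xs) = wedgeT t + wedgeT t"
    using wedgeT_equiv[OF alt] wedgeT_sigma[OF t] by (simp add: wedgeT_diff)
  then have "Gmap g x y (alt_tens_list xs) \<in> ZA"
    using x y xs(1) wedge_central by (intro Gmap_alt_tens_list_ZA) (simp_all add: algebra_simps)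
  moreover have "Gmap g x y (t - sigma t) = Gmap g x y (alt_tens_list xs)"
    using x y alt by (intro Gmap_equiv) (simp_all add: centre_ofD)
  ultimately show ?thesis
    by simp
qed

lemma Gmap_alt_nabla0_ZA:
  assumes "fg_projective Om n p iota" "x \<in> ZE" "y \<in> ZE" "w \<in> ZE"
  shows "Gmap g x y (nabla0 Om d n p iota F w - sigma (nabla0 Om d n p iota F w)) \<in> ZA"
proof (rule Gmap_alt_ZA)
  have w: "w \<in> Om 1"
    using assms(4) by (rule centre_ofD)
  with assms(1) show "nabla0 Om d n p iota F w \<in> TE"
    by (rule nabla0_tfree)
  fix a
  assume "a \<in> Om 0"
  then show "a * wedgeT (nabla0 Om d n p iota F w) = wedgeT (nabla0 Om d n p iota F w) * a"
    using d_ZE_commute[OF assms(4)] by (simp add: wedgeT_nabla0[OF assms(1) w])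
qed (use assms in auto)

end

theorem lemma6p8:
  fixes Om :: "nat \<Rightarrow> 'w::ring_1 set"
    and d :: "'w \<Rightarrow> 'w" and c :: "complex \<Rightarrow> 'w"
    and n :: nat and p :: "nat \<Rightarrow> nat \<Rightarrow> 'w" and iota :: "'w \<Rightarrow> nat \<Rightarrow> 'w"
    and F :: "'w frtens set" and psym :: "'w frtens \<Rightarrow> 'w frtens"
    and g :: "'w \<Rightarrow> 'w \<Rightarrow> 'w"
  assumes "diff_calculus Om d c"
    and "fg_projective Om n p iota"
    and "cond_central_basis Om"
    and "cond_split Om F psym"
    and "cond_flip Om psym"
    and "pseudo_riem_metric Om psym g"
    and "\<omega> \<in> centre_of (Om 1) (Om 0)" and "\<eta> \<in> centre_of (Om 1) (Om 0)"
    and "\<theta> \<in> centre_of (Om 1) (Om 0)"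
  shows "psi Om d n p iota F psym g \<omega> \<theta> \<eta> \<in> centre_of (Om 0) (Om 0)"
proof -
  interpret metric_calculus Om d c F psym g
    using assms(1,3-6) by unfold_locales
  show ?thesis
    unfolding psi_def Let_def
    using assms(2,7-9)
    by (intro ZA_add ZA_diff g_ZA d_ZA Gmap_alt_nabla0_ZA)
qed

end
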